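(* Fix reals $a<b$, $S=T\cap[a,b]$, a natural number $m\ge1$, an integer $\ell\ge1$ and reals $a=u_1<u_2<\cdots<u_\ell<u_{\ell+1}=b$. Let $\mathcal A$ be any set of constraints on real tuples $(c,(x_i^{(k)})_{1\le i\le \ell,\,0\le k\le 2m-1})$ such that for every $S$-code $C$ the tuple $(|C|,(x_i^{(k)}(C)))$ satisfies $\mathcal A$. Let $c^*(m)$ be the supremum of $c$ over all real $c,z,(x_i^{(k)})$ satisfying: (5) $\begin{pmatrix}1&c\\ c&z\end{pmatrix}\succeq0$ and $z=c+x_1^{(0)}+\cdots+x_\ell^{(0)}$; (6) $c+\sum_{d=0}^k p_{kd}\sum_{i=1}^\ell x_i^{(d)}\ge0$ for $k=1,\ldots,2m-1$; (7) $H_m(x_i^{(0)},x_i^{(1)},\ldots,x_i^{(2m-1)},[u_i,u_{i+1}])\succeq0$ for $i=1,\ldots,\ell$; (8) the constraints $\mathcal A$. Then $A(\mathbf M,S)\le c^*(m)$.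
   Context: $\mathbf M$ is a 2-point-homogeneous space with its associated real function $\tau(x,y)$, $\tau_0:=\tau(x,x)$, and $T=\{\tau(x,y):x,y\in\mathbf M\}$. Its zonal spherical functions $\Phi_k$ are assumed to be real polynomials of degree $k$, $\Phi_k(t)=\sum_{d=0}^k p_{kd}t^d$, with $\Phi_k(\tau_0)=1$, such that for every $k\ge0$ and every finite $\{x_1,\ldots,x_N\}\subset\mathbf M$ the matrix $(\Phi_k(\tau(x_i,x_j)))_{i,j}$ is positive semidefinite. An $S$-code is a finite $C\subset\mathbf M$ with $\tau(x,y)\in S$ for all distinct $x,y\in C$; $A(\mathbf M,S)$ is the largest cardinality of an $S$-code. For an $S$-code $C=\{z_1,\ldots,z_c\}$, $x_i^{(k)}(C):=\sum \tau(z_p,z_q)^k$, the sum over ordered pairs $(p,q)$ with $p\ne q$ and $\tau(z_p,z_q)\in[u_i,u_{i+1})$ for $i<\ell$, resp. $\tau(z_p,z_q)\in[u_\ell,b]$ for $i=\ell$ (with $\tau^0:=1$). For reals $s_0,\ldots,s_{2m-1}$ and $\alpha<\beta$: $R_m=(s_{i+j-2})_{i,j=1}^m$, $F_m^+(\alpha)=(s_{i+j-1}-\alpha s_{i+j-2})$, $F_m^-(\beta)=(\beta s_{i+j-2}-s_{i+j-1})$, $H_m(s_0,\ldots,s_{2m-1},[\alpha,\beta])=\operatorname{diag}(R_m,F_m^+(\alpha),F_m^-(\beta))$. *)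

theory Defs
  imports Complex_Main "HOL-Library.Extended_Real"
begin

definition psd_mat :: "nat \<Rightarrow> (nat \<Rightarrow> nat \<Rightarrow> real) \<Rightarrow> bool" where
  "psd_mat n A \<longleftrightarrow> (\<forall>i<n. \<forall>j<n. A i j = A j i) \<and>
     (\<forall>v :: nat \<Rightarrow> real. 0 \<le> (\<Sum>i<n. \<Sum>j<n. v i * A i j * v j))"

definition Phi :: "(nat \<Rightarrow> nat \<Rightarrow> real) \<Rightarrow> nat \<Rightarrow> real \<Rightarrow> real" where
  "Phi p k t = (\<Sum>d\<le>k. p k d * t ^ d)"

definition tau_values :: "('a \<Rightarrow> 'a \<Rightarrow> real) \<Rightarrow> real set" where
  "tau_values \<tau> = {\<tau> x y | x y. True}"

definition is_code :: "('a \<Rightarrow> 'a \<Rightarrow> real) \<Rightarrow> real set \<Rightarrow> 'a set \<Rightarrow> bool" where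
  "is_code \<tau> S C \<longleftrightarrow> finite C \<and> (\<forall>x\<in>C. \<forall>y\<in>C. x \<noteq> y \<longrightarrow> \<tau> x y \<in> S)"

definition A_code :: "('a \<Rightarrow> 'a \<Rightarrow> real) \<Rightarrow> real set \<Rightarrow> ereal" where
  "A_code \<tau> S = Sup {ereal (real (card C)) | C. is_code \<tau> S C}"

definition interval_i :: "(nat \<Rightarrow> real) \<Rightarrow> nat \<Rightarrow> nat \<Rightarrow> real set" where
  "interval_i u l i = (if i < l then {u i..<u (Suc i)} else {u l..u (Suc l)})"

definition xcode :: "('a \<Rightarrow> 'a \<Rightarrow> real) \<Rightarrow> (nat \<Rightarrow> real) \<Rightarrow> nat \<Rightarrow> 'a set \<Rightarrow> nat \<Rightarrow> nat \<Rightarrow> real" where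
  "xcode \<tau> u l C i k =
     (\<Sum>(y, z) \<in> {(y, z). y \<in> C \<and> z \<in> C \<and> y \<noteq> z \<and> \<tau> y z \<in> interval_i u l i}. \<tau> y z ^ k)"

definition restr_tuple :: "nat \<Rightarrow> nat \<Rightarrow> (nat \<Rightarrow> nat \<Rightarrow> real) \<Rightarrow> nat \<Rightarrow> nat \<Rightarrow> real" where
  "restr_tuple l m x = (\<lambda>i k. if 1 \<le> i \<and> i \<le> l \<and> k < 2 * m then x i k else 0)"

text \<open>Hankel-type block matrix H_m(s_0,...,s_{2m-1},[alpha,beta]) = diag(R_m, F_m^+, F_m^-),
  0-indexed, of size 3m.\<close>
definition H_mat :: "nat \<Rightarrow> (nat \<Rightarrow> real) \<Rightarrow> real \<Rightarrow> real \<Rightarrow> nat \<Rightarrow> nat \<Rightarrow> real" where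
  "H_mat m s \<alpha> \<beta> i j =
     (if i < m \<and> j < m then s (i + j)
      else if m \<le> i \<and> i < 2 * m \<and> m \<le> j \<and> j < 2 * m then
        s ((i - m) + (j - m) + 1) - \<alpha> * s ((i - m) + (j - m))
      else if 2 * m \<le> i \<and> i < 3 * m \<and> 2 * m \<le> j \<and> j < 3 * m then
        \<beta> * s ((i - 2 * m) + (j - 2 * m)) - s ((i - 2 * m) + (j - 2 * m) + 1)
      else 0)"

definition feasible ::
  "(nat \<Rightarrow> nat \<Rightarrow> real) \<Rightarrow> (nat \<Rightarrow> real) \<Rightarrow> nat \<Rightarrow> nat \<Rightarrow>
   (real \<Rightarrow> (nat \<Rightarrow> nat \<Rightarrow> real) \<Rightarrow> bool) \<Rightarrow> real \<Rightarrow> real \<Rightarrow> (nat \<Rightarrow> nat \<Rightarrow> real) \<Rightarrow> bool" where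
  "feasible p u l m Acon c z x \<longleftrightarrow>
     psd_mat 2 (\<lambda>i j. if i = 0 \<and> j = 0 then 1 else if i = 1 \<and> j = 1 then z else c) \<and>
     z = c + (\<Sum>i=1..l. x i 0) \<and>
     (\<forall>k\<in>{1..2 * m - 1}. 0 \<le> c + (\<Sum>d=0..k. p k d * (\<Sum>i=1..l. x i d))) \<and>
     (\<forall>i\<in>{1..l}. psd_mat (3 * m) (H_mat m (x i) (u i) (u (Suc i)))) \<and>
     Acon c (restr_tuple l m x)"

definition c_star ::
  "(nat \<Rightarrow> nat \<Rightarrow> real) \<Rightarrow> (nat \<Rightarrow> real) \<Rightarrow> nat \<Rightarrow> nat \<Rightarrow>
   (real \<Rightarrow> (nat \<Rightarrow> nat \<Rightarrow> real) \<Rightarrow> bool) \<Rightarrow> ereal" where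
  "c_star p u l m Acon = Sup {ereal c | c. \<exists>z x. feasible p u l m Acon c z x}"

end

theory Submission
  imports Defs
begin

text \<open>Every S-code C yields a feasible point of (5)-(8): c = |C|, z = c^2 and
  x_i^(k) = x_i^(k)(C). As the intervals partition [a,b], the sum over i of x_i^(k) is the
  k-th power sum of \<tau> over ordered pairs of distinct points of C; for k = 0 it is c^2 - c,
  so (5) is the rank-one matrix (1,c)(1,c)^T. Summing all entries of the positive
  semidefinite matrix (\<Phi>_k(\<tau>(z_p,z_q))) gives (6), the diagonal contributing c. Each x_i is
  a sum of moment sequences of points t in [u_i,u_{i+1}], for which H_m is a sum of rank-one
  matrices with weights 1, t - u_i and u_{i+1} - t; this gives (7).\<close>

lemma psd_mat_cong:
  assumes "\<And>i j. i < n \<Longrightarrow> j < n \<Longrightarrow> A i j = B i j" and "psd_mat n B"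
  shows "psd_mat n A"
proof -
  have "(\<Sum>i<n. \<Sum>j<n. v i * A i j * v j) = (\<Sum>i<n. \<Sum>j<n. v i * B i j * v j)" for v
    using assms(1) by (intro sum.cong) auto
  then show ?thesis using assms unfolding psd_mat_def by auto
qed

lemma psd_mat_scaled_outer:
  assumes "0 \<le> w"
  shows "psd_mat n (\<lambda>i j. w * f i * f j)"
proof -
  have "(\<Sum>i<n. \<Sum>j<n. v i * (w * f i * f j) * v j) = w * (\<Sum>i<n. v i * f i)\<^sup>2" for v
    by (simp add: power2_eq_square sum_product sum_distrib_left mult_ac)
  then show ?thesis using assms unfolding psd_mat_def by auto
qed

lemma psd_mat_add:
  assumes "psd_mat n A" "psd_mat n B"
  shows "psd_mat n (\<lambda>i j. A i j + B i j)"
proof -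
  have "(\<Sum>i<n. \<Sum>j<n. v i * (A i j + B i j) * v j) =
     (\<Sum>i<n. \<Sum>j<n. v i * A i j * v j) + (\<Sum>i<n. \<Sum>j<n. v i * B i j * v j)" for v
    by (simp add: algebra_simps sum.distrib)
  then show ?thesis using assms unfolding psd_mat_def by auto
qed

lemma psd_mat_sum:
  assumes "finite Q" "\<And>q. q \<in> Q \<Longrightarrow> psd_mat n (A q)"
  shows "psd_mat n (\<lambda>i j. \<Sum>q\<in>Q. A q i j)"
  using assms
proof (induction Q rule: finite_induct)
  case empty
  then show ?case unfolding psd_mat_def by simp
next
  case (insert q Q)
  then show ?case using psd_mat_add[of n "A q" "\<lambda>i j. \<Sum>q\<in>Q. A q i j"] by simp
qed

lemma psd_mat_imp_sum_nonneg:
  assumes "psd_mat n A"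
  shows "0 \<le> (\<Sum>i<n. \<Sum>j<n. A i j)"
  using assms unfolding psd_mat_def by (auto dest: spec[of _ "\<lambda>_. 1"])

lemma psd_kernel_sum_nonneg:
  fixes K :: "'a \<Rightarrow> 'a \<Rightarrow> real"
  assumes "\<forall>N (x :: nat \<Rightarrow> 'a). inj_on x {..<N} \<longrightarrow> psd_mat N (\<lambda>i j. K (x i) (x j))"
    and "finite C"
  shows "0 \<le> (\<Sum>y\<in>C. \<Sum>w\<in>C. K y w)"
proof -
  obtain h where h: "bij_betw h {..<card C} C"
    using ex_bij_betw_nat_finite[OF \<open>finite C\<close>] by (auto simp: lessThan_atLeast0)
  then have "0 \<le> (\<Sum>i<card C. \<Sum>j<card C. K (h i) (h j))"
    using assms(1) by (intro psd_mat_imp_sum_nonneg) (simp add: bij_betw_imp_inj_on)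
  also have "\<dots> = (\<Sum>i<card C. \<Sum>w\<in>C. K (h i) w)"
    by (simp only: sum.reindex_bij_betw[OF h])
  also have "\<dots> = (\<Sum>y\<in>C. \<Sum>w\<in>C. K y w)"
    by (rule sum.reindex_bij_betw[OF h])
  finally show ?thesis .
qed

lemma H_mat_sum:
  "H_mat m (\<lambda>k. \<Sum>q\<in>Q. s q k) \<alpha> \<beta> i j = (\<Sum>q\<in>Q. H_mat m (s q) \<alpha> \<beta> i j)"
  unfolding H_mat_def by (auto simp: sum_distrib_left sum_subtractf)

text \<open>H_m of the moments of t is diag(g g^T, (t-\<alpha>) g g^T, (\<beta>-t) g g^T), g = (1,t,...,t^(m-1)).\<close>
lemma psd_H_mat_powers:
  fixes t :: real
  assumes "\<alpha> \<le> t" "t \<le> \<beta>"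
  shows "psd_mat (3 * m) (H_mat m (\<lambda>k. t ^ k) \<alpha> \<beta>)"
proof -
  define g where "g r i = (if r * m \<le> i \<and> i < (r + 1) * m then t ^ (i - r * m) else 0)" for r i
  have "psd_mat (3 * m) (\<lambda>i j. (1 * g 0 i * g 0 j + (t - \<alpha>) * g 1 i * g 1 j) +
      (\<beta> - t) * g 2 i * g 2 j)"
    using assms by (intro psd_mat_add psd_mat_scaled_outer) auto
  then show ?thesis
    by (rule psd_mat_cong[rotated]) (auto simp: H_mat_def g_def power_add[symmetric] algebra_simps)
qed

lemma psd_H_mat_power_sums:
  assumes "finite P" "\<And>q. q \<in> P \<Longrightarrow> f q \<in> {\<alpha>..\<beta>}"
  shows "psd_mat (3 * m) (H_mat m (\<lambda>k. \<Sum>q\<in>P. f q ^ k) \<alpha> \<beta>)"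
  unfolding H_mat_sum using assms by (intro psd_mat_sum psd_H_mat_powers) auto

lemma partition_points_mono:
  fixes u :: "nat \<Rightarrow> real"
  assumes "\<forall>i\<in>{1..l}. u i < u (i + 1)" "1 \<le> i" "i \<le> j" "j \<le> l + 1"
  shows "u i \<le> u j"
  using assms(3,4)
proof (induction j rule: dec_induct)
  case (step n)
  then have "u i \<le> u n" by simp
  also have "u n < u (Suc n)" using assms(1,2) step by auto
  finally show ?case by simp
qed simp

lemma interval_i_subset:
  assumes "i \<in> {1..l}"
  shows "interval_i u l i \<subseteq> {u i..u (Suc i)}"
  using assms by (auto simp: interval_i_def)

lemma interval_i_unique:
  fixes u :: "nat \<Rightarrow> real"
  assumes um: "\<forall>i\<in>{1..l}. u i < u (i + 1)" and l: "1 \<le> l"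
    and t: "t \<in> {u 1..u (l + 1)}"
  shows "\<exists>!i. i \<in> {1..l} \<and> t \<in> interval_i u l i"
proof -
  define K where "K = {i\<in>{1..l}. u i \<le> t}"
  have "finite K" "1 \<in> K" using l t by (auto simp: K_def)
  define i0 where "i0 = Max K"
  have "i0 \<in> K" using Max_in \<open>finite K\<close> \<open>1 \<in> K\<close> i0_def by blast
  then have i0: "i0 \<in> {1..l}" "u i0 \<le> t" by (auto simp: K_def)
  have i0_max: "j \<le> i0" if "j \<in> {1..l}" "u j \<le> t" for j
    using that \<open>finite K\<close> by (simp add: i0_def K_def)
  have i0_interval: "i0 \<in> {1..l} \<and> t \<in> interval_i u l i0"
  proof (cases "i0 < l")
    case True
    then have "t < u (Suc i0)" using i0_max[of "Suc i0"] by force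
    then show ?thesis using True i0 by (simp add: interval_i_def)
  next
    case False
    then show ?thesis using i0 t by (simp add: interval_i_def)
  qed
  have "i = i0" if i: "i \<in> {1..l}" "t \<in> interval_i u l i" for i
  proof (rule antisym)
    show "i \<le> i0" using i i0_max by (auto simp: interval_i_def split: if_splits)
    show "i0 \<le> i"
    proof (rule ccontr)
      assume "\<not> i0 \<le> i"
      then have "t < u (Suc i)" using i i0 by (simp add: interval_i_def)
      also have "u (Suc i) \<le> u i0"
        using i i0 \<open>\<not> i0 \<le> i\<close> by (intro partition_points_mono[OF um]) auto
      finally show False using i0(2) by simp
    qed
  qed
  with i0_interval show ?thesis by blast
qed

lemma sum_interval_i_indicator:
  fixes u :: "nat \<Rightarrow> real"
  assumes "\<forall>i\<in>{1..l}. u i < u (i + 1)" "1 \<le> l" "t \<in> {u 1..u (l + 1)}"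
  shows "(\<Sum>i=1..l. if t \<in> interval_i u l i then f else 0) = f"
proof -
  obtain i0 where "{i\<in>{1..l}. t \<in> interval_i u l i} = {i0}"
    using interval_i_unique[OF assms] by blast
  then show ?thesis by (simp flip: sum.inter_filter)
qed

definition off_diag :: "'a set \<Rightarrow> ('a \<times> 'a) set" where
  "off_diag C = {(y, z). y \<in> C \<and> z \<in> C \<and> y \<noteq> z}"

lemma off_diag_eq_Sigma: "off_diag C = Sigma C (\<lambda>y. C - {y})"
  by (auto simp: off_diag_def)

lemma finite_off_diag: "finite C \<Longrightarrow> finite (off_diag C)"
  by (simp add: off_diag_eq_Sigma)

lemma card_off_diag:
  assumes "finite C"
  shows "real (card (off_diag C)) = (real (card C))\<^sup>2 - real (card C)"
proof -
  have "card (off_diag C) = card C * (card C - 1)"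
    using assms by (simp add: off_diag_eq_Sigma card_Diff_singleton)
  moreover have "card C = 0 \<or> 1 \<le> card C" by linarith
  ultimately show ?thesis by (auto simp: of_nat_diff power2_eq_square algebra_simps)
qed

lemma sum_square_split_diag:
  assumes "finite C"
  shows "(\<Sum>y\<in>C. \<Sum>w\<in>C. K y w) = (\<Sum>y\<in>C. K y y) + (\<Sum>(y, w)\<in>off_diag C. K y w)"
proof -
  have "(\<Sum>y\<in>C. \<Sum>w\<in>C. K y w) = (\<Sum>y\<in>C. K y y + (\<Sum>w\<in>C - {y}. K y w))"
    using assms by (intro sum.cong) (auto simp: sum.remove)
  also have "\<dots> = (\<Sum>y\<in>C. K y y) + (\<Sum>(y, w)\<in>off_diag C. K y w)"
    using assms by (simp add: sum.distrib off_diag_eq_Sigma sum.Sigma)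
  finally show ?thesis .
qed

lemma xcode_eq_power_sum:
  "xcode \<tau> u l C i =
     (\<lambda>k. \<Sum>q\<in>{q\<in>off_diag C. case_prod \<tau> q \<in> interval_i u l i}. case_prod \<tau> q ^ k)"
  unfolding xcode_def off_diag_def by (auto simp: fun_eq_iff intro!: sum.cong)

lemma psd_H_mat_xcode:
  assumes "finite C" "i \<in> {1..l}"
  shows "psd_mat (3 * m) (H_mat m (xcode \<tau> u l C i) (u i) (u (Suc i)))"
  unfolding xcode_eq_power_sum
  by (rule psd_H_mat_power_sums)
    (auto simp: finite_off_diag assms(1) dest!: subsetD[OF interval_i_subset[OF assms(2)]])

lemma sum_xcode_eq_off_diag_power_sum:
  fixes u :: "nat \<Rightarrow> real"
  assumes "finite C" "\<forall>i\<in>{1..l}. u i < u (i + 1)" "1 \<le> l"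
    and "\<And>y z. (y, z) \<in> off_diag C \<Longrightarrow> \<tau> y z \<in> {u 1..u (l + 1)}"
  shows "(\<Sum>i=1..l. xcode \<tau> u l C i k) = (\<Sum>(y, z)\<in>off_diag C. \<tau> y z ^ k)"
proof -
  have "(\<Sum>i=1..l. xcode \<tau> u l C i k) =
      (\<Sum>i=1..l. \<Sum>q\<in>off_diag C. if case_prod \<tau> q \<in> interval_i u l i then case_prod \<tau> q ^ k else 0)"
    using assms(1) by (simp add: xcode_eq_power_sum sum.inter_filter finite_off_diag)
  also have "\<dots> =
      (\<Sum>q\<in>off_diag C. \<Sum>i=1..l. if case_prod \<tau> q \<in> interval_i u l i then case_prod \<tau> q ^ k else 0)"
    by (rule sum.swap)
  also have "\<dots> = (\<Sum>q\<in>off_diag C. case_prod \<tau> q ^ k)"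
  proof (rule sum.cong[OF refl])
    fix q assume "q \<in> off_diag C"
    show "(\<Sum>i=1..l. if case_prod \<tau> q \<in> interval_i u l i then case_prod \<tau> q ^ k else 0) =
        case_prod \<tau> q ^ k"
      using \<open>q \<in> off_diag C\<close> assms(4)
      by (cases q) (simp only: case_prod_conv sum_interval_i_indicator[OF assms(2,3)])
  qed
  also have "\<dots> = (\<Sum>(y, z)\<in>off_diag C. \<tau> y z ^ k)"
    by (simp add: case_prod_beta)
  finally show ?thesis .
qed

lemma delsarte_inequality:
  fixes \<tau> :: "'a \<Rightarrow> 'a \<Rightarrow> real"
  assumes "\<forall>x. \<tau> x x = \<tau>0" "Phi p k \<tau>0 = 1"
    and "\<forall>N (x :: nat \<Rightarrow> 'a). inj_on x {..<N} \<longrightarrow> psd_mat N (\<lambda>i j. Phi p k (\<tau> (x i) (x j)))"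
    and "finite C"
  shows "0 \<le> real (card C) + (\<Sum>d=0..k. p k d * (\<Sum>(y, z)\<in>off_diag C. \<tau> y z ^ d))"
proof -
  have "0 \<le> (\<Sum>y\<in>C. \<Sum>w\<in>C. Phi p k (\<tau> y w))"
    using assms(3,4) by (rule psd_kernel_sum_nonneg)
  also have "\<dots> = real (card C) + (\<Sum>(y, z)\<in>off_diag C. Phi p k (\<tau> y z))"
    using assms(1,2,4) by (simp add: sum_square_split_diag)
  also have "(\<Sum>(y, z)\<in>off_diag C. Phi p k (\<tau> y z)) =
      (\<Sum>q\<in>off_diag C. \<Sum>d=0..k. p k d * case_prod \<tau> q ^ d)"
    by (simp add: Phi_def atLeast0AtMost case_prod_beta)
  also have "\<dots> = (\<Sum>d=0..k. \<Sum>q\<in>off_diag C. p k d * case_prod \<tau> q ^ d)"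
    by (rule sum.swap)
  also have "\<dots> = (\<Sum>d=0..k. p k d * (\<Sum>(y, z)\<in>off_diag C. \<tau> y z ^ d))"
    by (simp add: sum_distrib_left case_prod_beta)
  finally show ?thesis .
qed

lemma code_feasible:
  fixes \<tau> :: "'a \<Rightarrow> 'a \<Rightarrow> real" and u :: "nat \<Rightarrow> real"
  assumes tau0: "\<forall>x. \<tau> x x = \<tau>0"
    and norm: "\<forall>k. Phi p k \<tau>0 = 1"
    and pd: "\<forall>k N (x :: nat \<Rightarrow> 'a). inj_on x {..<N} \<longrightarrow>
               psd_mat N (\<lambda>i j. Phi p k (\<tau> (x i) (x j)))"
    and l: "1 \<le> l" and umono: "\<forall>i\<in>{1..l}. u i < u (i + 1)"
    and code: "is_code \<tau> S C" and S: "S \<subseteq> {u 1..u (l + 1)}"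
    and Acon: "Acon (real (card C)) (restr_tuple l m (xcode \<tau> u l C))"
  shows "feasible p u l m Acon (real (card C)) ((real (card C))\<^sup>2) (xcode \<tau> u l C)"
proof -
  define c where "c = real (card C)"
  have fin: "finite C" using code by (simp add: is_code_def)
  have dist: "\<tau> y z \<in> {u 1..u (l + 1)}" if "(y, z) \<in> off_diag C" for y z
    using code S that unfolding is_code_def off_diag_def by blast
  have moments: "(\<Sum>i=1..l. xcode \<tau> u l C i k) = (\<Sum>(y, z)\<in>off_diag C. \<tau> y z ^ k)" for k
    using fin umono l dist by (rule sum_xcode_eq_off_diag_power_sum)
  have "psd_mat 2 (\<lambda>i j. if i = 0 \<and> j = 0 then 1 else if i = 1 \<and> j = 1 then c\<^sup>2 else c)"
    by (rule psd_mat_cong[OF _ psd_mat_scaled_outer[of 1 2 "\<lambda>i. c ^ i"]])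
      (auto simp: less_2_cases_iff power2_eq_square)
  moreover have "c\<^sup>2 = c + (\<Sum>i=1..l. xcode \<tau> u l C i 0)"
    using card_off_diag[OF fin] unfolding moments c_def by simp
  moreover have "0 \<le> c + (\<Sum>d=0..k. p k d * (\<Sum>i=1..l. xcode \<tau> u l C i d))" for k
    using delsarte_inequality[OF tau0 spec[OF norm] spec[OF pd] fin] unfolding moments c_def .
  moreover have "psd_mat (3 * m) (H_mat m (xcode \<tau> u l C i) (u i) (u (Suc i)))"
    if "i \<in> {1..l}" for i
    using fin that by (rule psd_H_mat_xcode)
  ultimately show ?thesis
    using Acon unfolding feasible_def c_def by blast
qed

theorem theorem6p1:
  fixes \<tau> :: "'a \<Rightarrow> 'a \<Rightarrow> real" and \<tau>0 :: real
    and p :: "nat \<Rightarrow> nat \<Rightarrow> real"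
    and a b :: real and m l :: nat and u :: "nat \<Rightarrow> real"
    and Acon :: "real \<Rightarrow> (nat \<Rightarrow> nat \<Rightarrow> real) \<Rightarrow> bool"
  assumes tau0: "\<forall>x. \<tau> x x = \<tau>0"
    and deg: "\<forall>k. p k k \<noteq> 0"
    and norm: "\<forall>k. Phi p k \<tau>0 = 1"
    and pd: "\<forall>k N (x :: nat \<Rightarrow> 'a). inj_on x {..<N} \<longrightarrow>
               psd_mat N (\<lambda>i j. Phi p k (\<tau> (x i) (x j)))"
    and ab: "a < b" and m: "1 \<le> m" and l: "1 \<le> l"
    and u1: "u 1 = a" and ul: "u (l + 1) = b"
    and umono: "\<forall>i\<in>{1..l}. u i < u (i + 1)"
    and Acodes: "\<forall>C. is_code \<tau> (tau_values \<tau> \<inter> {a..b}) C \<longrightarrow>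
               Acon (real (card C)) (restr_tuple l m (xcode \<tau> u l C))"
  shows "A_code \<tau> (tau_values \<tau> \<inter> {a..b}) \<le> c_star p u l m Acon"
  unfolding A_code_def
proof (rule Sup_least, clarify)
  fix C assume code: "is_code \<tau> (tau_values \<tau> \<inter> {a..b}) C"
  have "tau_values \<tau> \<inter> {a..b} \<subseteq> {u 1..u (l + 1)}" using u1 ul by auto
  then have "feasible p u l m Acon (real (card C)) ((real (card C))\<^sup>2) (xcode \<tau> u l C)"
    using code_feasible[OF tau0 norm pd l umono code] Acodes code by blast
  then show "ereal (real (card C)) \<le> c_star p u l m Acon"
    unfolding c_star_def by (intro Sup_upper) blast
qed

end
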